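(* Let $n=3$, $\Pi=\{p_1,p_2,p_3\}$ and $\mathcal A=\{\{p_1\},\{p_2,p_3\},\{p_1,p_2,p_3\}\}$. Then: (i) $\mathit{setcon}(\mathcal A)=2$ and $\mathit{setcon}(\mathcal A|_{\Pi,\{p_2,p_3\}})=1$, so $\mathcal A$ is not fair; (ii) the agreement function $\alpha_{\mathcal A}$ of the $\mathcal A$-model satisfies $\alpha_{\mathcal A}(\{p_2\})=\alpha_{\mathcal A}(\{p_3\})=0$, $\alpha_{\mathcal A}(\Pi)=2$ and $\alpha_{\mathcal A}(P)=1$ for every other nonempty $P$; (iii) the task $\mathit{Cons}_{2,3}$ (processes $p_2,p_3$ propose values; each correct process among $p_2,p_3$ must decide a proposed value, and $p_2,p_3$ never decide different values) is solvable in the $\mathcal A$-model but not in the $\alpha_{\mathcal A}$-model. Hence the $\mathcal A$-model and the $\alpha_{\mathcal A}$-model are not equivalent with respect to task solvability.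
   Context: Processes communicate through a shared atomic-snapshot memory; a run is a sequence of process identifiers giving the order of steps, a model is a set of runs. A process is correct if it takes infinitely many steps, and participates if it takes at least one step. An algorithm solves a task in model $M$ if all decisions in every run are valid for the task and in every run of $M$ every correct process (of those required to output) decides. An adversary is a set $\mathcal A\subseteq2^\Pi$ of live sets; the $\mathcal A$-model is the set of infinite runs whose set of correct processes is in $\mathcal A$. $\mathcal A|_P=\{S\in\mathcal A:S\subseteq P\}$, $\mathcal A|_{P,Q}=\{S\in\mathcal A|_P:S\cap Q\ne\emptyset\}$; $\mathit{setcon}(\emptyset)=0$ and for $\mathcal A\ne\emptyset$, $\mathit{setcon}(\mathcal A)=\max_{S\in\mathcal A}\min_{a\in S}\mathit{setcon}(\mathcal A|_{S\setminus\{a\}})+1$. $\mathcal A$ is fair if $\mathit{setcon}(\mathcal A|_{P,Q})=\min(|Q|,\mathit{setcon}(\mathcal A|_P))$ for all $Q\subseteq P\subseteq\Pi$. The agreement function of a model $M$ maps $P$ to the least $k$ such that $k$-set consensus is solvable in the runs of $M$ where only processes of $P$ participate ($0$ if there is no infinite such run). For monotonic $\alpha$, the $\alpha$-model is the set of runs whose participating set $P$ satisfies $\alpha(P)\ge1$ and in which at most $\alpha(P)-1$ participating processes take only finitely many steps. *)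

theory Defs
  imports Main
begin

datatype proc = P1 | P2 | P3

lemma UNIV_proc: "(UNIV :: proc set) = {P1, P2, P3}"
  using proc.exhaust by auto

instance proc :: finite
  by standard (simp add: UNIV_proc)

definition restr :: "'a set set \<Rightarrow> 'a set \<Rightarrow> 'a set set" where
  "restr A P = {S \<in> A. S \<subseteq> P}"

definition restr2 :: "'a set set \<Rightarrow> 'a set \<Rightarrow> 'a set \<Rightarrow> 'a set set" where
  "restr2 A P Q = {S \<in> restr A P. S \<inter> Q \<noteq> {}}"

function setcon :: "('a::finite) set set \<Rightarrow> nat" where
  "setcon A = (if A = {} then 0
     else Max ((\<lambda>S. Min ((\<lambda>a. setcon (restr A (S - {a}))) ` S) + 1) ` A))"
  by auto
termination
proof (relation "measure (\<lambda>A. card (\<Union>A))")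
  show "wf (measure (\<lambda>A::'a set set. card (\<Union> A)))" by simp
next
  fix A :: "'a set set" and S a
  assume "A \<noteq> {}" "S \<in> A" "a \<in> S"
  have "\<Union>(restr A (S - {a})) \<subseteq> S - {a}" by (auto simp: restr_def)
  also have "S - {a} \<subset> \<Union>A" using \<open>S \<in> A\<close> \<open>a \<in> S\<close> by auto
  finally have "\<Union>(restr A (S - {a})) \<subset> \<Union>A" .
  then show "(restr A (S - {a}), A) \<in> measure (\<lambda>A. card (\<Union> A))"
    by (simp add: psubset_card_mono)
qed

declare setcon.simps[simp del]

definition fair :: "('a::finite) set set \<Rightarrow> bool" where
  "fair A \<longleftrightarrow> (\<forall>P Q. Q \<subseteq> P \<longrightarrow>
      setcon (restr2 A P Q) = min (card Q) (setcon (restr A P)))"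

definition Aadv :: "proc set set" where
  "Aadv = {{P1}, {P2, P3}, {P1, P2, P3}}"

type_synonym mem = "proc \<Rightarrow> nat option"

datatype operation = Update nat | Snapshot

text \<open>A deterministic algorithm: local states and register values are natural
  numbers (any countable encoding); inputs are optional natural numbers.\<close>
record alg =
  a_init :: "proc \<Rightarrow> nat option \<Rightarrow> nat"
  a_op :: "proc \<Rightarrow> nat \<Rightarrow> operation"
  a_next_upd :: "proc \<Rightarrow> nat \<Rightarrow> nat"
  a_next_snap :: "proc \<Rightarrow> nat \<Rightarrow> mem \<Rightarrow> nat"
  a_dec :: "proc \<Rightarrow> nat \<Rightarrow> nat option"

type_synonym config = "(proc \<Rightarrow> nat) \<times> mem"

definition step :: "alg \<Rightarrow> proc \<Rightarrow> config \<Rightarrow> config" where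
  "step A p c = (let st = fst c; m = snd c in
     case a_op A p (st p) of
       Update v \<Rightarrow> (st(p := a_next_upd A p (st p)), m(p := Some v))
     | Snapshot \<Rightarrow> (st(p := a_next_snap A p (st p) m), m))"

text \<open>A run is given by an infinite schedule of process identifiers; finite
  runs are prefixes of such schedules.\<close>
type_synonym schedule = "nat \<Rightarrow> proc"

fun exec :: "alg \<Rightarrow> (proc \<Rightarrow> nat option) \<Rightarrow> schedule \<Rightarrow> nat \<Rightarrow> config" where
  "exec A I \<sigma> 0 = ((\<lambda>p. a_init A p (I p)), (\<lambda>p. None))"
| "exec A I \<sigma> (Suc t) = step A (\<sigma> t) (exec A I \<sigma> t)"

definition decides :: "alg \<Rightarrow> (proc \<Rightarrow> nat option) \<Rightarrow> schedule \<Rightarrow> proc \<Rightarrow> nat \<Rightarrow> bool" where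
  "decides A I \<sigma> p v \<longleftrightarrow>
     (\<exists>t. \<sigma> t = p \<and> a_dec A p (fst (exec A I \<sigma> (Suc t)) p) = Some v)"

definition correct :: "schedule \<Rightarrow> proc set" where
  "correct \<sigma> = {p. infinite {t. \<sigma> t = p}}"

definition participating :: "schedule \<Rightarrow> proc set" where
  "participating \<sigma> = range \<sigma>"

definition adv_model :: "proc set set \<Rightarrow> schedule set" where
  "adv_model \<A> = {\<sigma>. correct \<sigma> \<in> \<A>}"

definition alpha_model :: "(proc set \<Rightarrow> nat) \<Rightarrow> schedule set" where
  "alpha_model \<alpha> = {\<sigma>. \<alpha> (participating \<sigma>) \<ge> 1 \<and>
      card (participating \<sigma> - correct \<sigma>) \<le> \<alpha> (participating \<sigma>) - 1}"

definition kset_solves :: "nat \<Rightarrow> schedule set \<Rightarrow> alg \<Rightarrow> bool" where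
  "kset_solves k M A \<longleftrightarrow>
     (\<forall>I \<sigma>. (\<forall>p. I p \<noteq> None) \<longrightarrow>
        (let D = {v. \<exists>p. decides A I \<sigma> p v} in
          finite D \<and> card D \<le> k \<and>
          (\<forall>v\<in>D. \<exists>q\<in>participating \<sigma>. I q = Some v))) \<and>
     (\<forall>I \<sigma>. (\<forall>p. I p \<noteq> None) \<longrightarrow> \<sigma> \<in> M \<longrightarrow>
        (\<forall>p\<in>correct \<sigma>. \<exists>v. decides A I \<sigma> p v))"

definition kset_solvable :: "nat \<Rightarrow> schedule set \<Rightarrow> bool" where
  "kset_solvable k M \<longleftrightarrow> (\<exists>A. kset_solves k M A)"

definition agreement_fun :: "schedule set \<Rightarrow> proc set \<Rightarrow> nat" where
  "agreement_fun M P =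
     (if \<exists>\<sigma>\<in>M. participating \<sigma> \<subseteq> P
      then (LEAST k. kset_solvable k {\<sigma>\<in>M. participating \<sigma> \<subseteq> P})
      else 0)"

definition cons23_inputs :: "(proc \<Rightarrow> nat option) \<Rightarrow> bool" where
  "cons23_inputs I \<longleftrightarrow> I P1 = None \<and> I P2 \<noteq> None \<and> I P3 \<noteq> None"

definition cons23_solves :: "schedule set \<Rightarrow> alg \<Rightarrow> bool" where
  "cons23_solves M A \<longleftrightarrow>
     (\<forall>I \<sigma>. cons23_inputs I \<longrightarrow>
        (\<forall>p v. p \<in> {P2, P3} \<and> decides A I \<sigma> p v \<longrightarrow>
            (\<exists>q\<in>{P2, P3} \<inter> participating \<sigma>. I q = Some v)) \<and>
        (\<forall>p q v w. p \<in> {P2, P3} \<and> q \<in> {P2, P3} \<and>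
            decides A I \<sigma> p v \<and> decides A I \<sigma> q w \<longrightarrow> v = w)) \<and>
     (\<forall>I \<sigma>. cons23_inputs I \<longrightarrow> \<sigma> \<in> M \<longrightarrow>
        (\<forall>p\<in>{P2, P3} \<inter> correct \<sigma>. \<exists>v. decides A I \<sigma> p v))"

definition cons23_solvable :: "schedule set \<Rightarrow> bool" where
  "cons23_solvable M \<longleftrightarrow> (\<exists>A. cons23_solves M A)"

end

(*
  For the upper bounds in (ii) and for the
  solvability half of (iii) one algorithm suffices: p1 and p2 decide their own inputs, and p3
  takes snapshots until it can read the input of p2, which it adopts. In the A-model p3 is
  correct only together with p2, so every correct process decides, and only the inputs of p1
  and p2 are ever decided.

  The lower bounds are valency arguments in the style of Fischer, Lynch and Paterson: consensus
  is impossible if the model contains all fair runs and, for every process r, runs in which r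
  stops at an arbitrary point while another process that must decide keeps running, provided
  that two runs decide differently. In the A-model this applies to consensus among all three
  processes (p1 running alone decides its input, p2 and p3 running together decide theirs), so
  the agreement function is 2 on the full set. The alpha-model, in contrast, contains every run
  in which one process crashes after all have started, so the argument applies to Cons_{2,3}
  there; in the A-model p2 never crashes while p3 runs, which is why Cons_{2,3} is solvable.
*)
theory Submission
  imports Defs "HOL-Library.Infinite_Set"
begin

definition init_config :: "alg \<Rightarrow> (proc \<Rightarrow> nat option) \<Rightarrow> config" where
  "init_config A I = ((\<lambda>p. a_init A p (I p)), (\<lambda>p. None))"

definition run :: "alg \<Rightarrow> config \<Rightarrow> proc list \<Rightarrow> config" where
  "run A c xs = fold (step A) xs c"

lemma run_Nil [simp]: "run A c [] = c"
  and run_Cons [simp]: "run A c (x # xs) = run A (step A x c) xs"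
  and run_append [simp]: "run A c (xs @ ys) = run A (run A c xs) ys"
  by (simp_all add: run_def)

lemma exec_eq_run: "exec A I \<sigma> n = run A (init_config A I) (map \<sigma> [0..<n])"
  by (induction n) (simp_all add: init_config_def)

lemma step_state_other: "q \<noteq> p \<Longrightarrow> fst (step A p c) q = fst c q"
  and step_mem_other: "q \<noteq> p \<Longrightarrow> snd (step A p c) q = snd c q"
  by (simp_all add: step_def Let_def split: operation.split)

definition agree_on :: "proc set \<Rightarrow> config \<Rightarrow> config \<Rightarrow> bool" where
  "agree_on G c d \<longleftrightarrow> snd c = snd d \<and> (\<forall>g\<in>G. fst c g = fst d g)"

lemma agree_on_run:
  assumes "agree_on G c d" and "set xs \<subseteq> G"
  shows "agree_on G (run A c xs) (run A d xs)"
  using assms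
proof (induction xs arbitrary: c d)
  case (Cons x xs)
  then have "agree_on G (step A x c) (step A x d)"
    by (auto simp: agree_on_def step_def Let_def split: operation.split)
  with Cons show ?case by simp
qed simp

text \<open>Two steps of distinct processes commute, except for the local state of a process whose
  step is a snapshot and may have seen the other's update.\<close>
lemma steps_commute:
  assumes "p \<noteq> q"
  shows "\<exists>r\<in>{p, q}. agree_on (- {r}) (step A q (step A p c)) (step A p (step A q c))"
  using assms
  by (cases "a_op A p (fst c p)"; cases "a_op A q (fst c q)")
     (auto simp: agree_on_def step_def Let_def fun_upd_twist split: operation.split)

lemma in_correct_iff: "p \<in> correct \<sigma> \<longleftrightarrow> (\<forall>N. \<exists>t\<ge>N. \<sigma> t = p)"
  by (simp add: correct_def infinite_nat_iff_unbounded_le)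

lemma correct_subset_participating: "correct \<sigma> \<subseteq> participating \<sigma>"
  by (metis in_correct_iff participating_def rangeI subsetI)

lemma correct_nonempty: "correct \<sigma> \<noteq> {}"
proof
  assume "correct \<sigma> = {}"
  then have "finite (\<Union>p. {t. \<sigma> t = p})"
    by (auto simp: correct_def)
  moreover have "(\<Union>p. {t. \<sigma> t = p}) = UNIV"
    by auto
  ultimately show False
    by simp
qed

definition prepend :: "proc list \<Rightarrow> schedule \<Rightarrow> schedule" where
  "prepend xs \<tau> t = (if t < length xs then xs ! t else \<tau> (t - length xs))"

lemma prepend_Nil [simp]: "prepend [] \<tau> = \<tau>"
  by (rule ext) (simp add: prepend_def)

lemma map_prepend_prefix: "k \<le> length xs \<Longrightarrow> map (prepend xs \<tau>) [0..<k] = take k xs"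
  by (rule nth_equalityI) (auto simp: prepend_def)

lemma map_prepend [simp]: "map (prepend xs \<tau>) [0..<length xs] = xs"
  by (simp add: map_prepend_prefix)

lemma map_prepend_suffix: "map (prepend xs \<tau>) [0..<length xs + k] = xs @ map \<tau> [0..<k]"
  by (rule nth_equalityI) (auto simp: prepend_def nth_append)

lemma correct_prepend: "correct (prepend xs \<tau>) = correct \<tau>"
proof -
  have "(\<forall>N. \<exists>t\<ge>N. prepend xs \<tau> t = p) \<longleftrightarrow> (\<forall>N. \<exists>t\<ge>N. \<tau> t = p)" for p
  proof
    assume late: "\<forall>N. \<exists>t\<ge>N. prepend xs \<tau> t = p"
    show "\<forall>N. \<exists>t\<ge>N. \<tau> t = p"
    proof
      fix N
      obtain t where "t \<ge> N + length xs" "prepend xs \<tau> t = p"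
        using late by blast
      then show "\<exists>t\<ge>N. \<tau> t = p"
        by (intro exI[of _ "t - length xs"]) (auto simp: prepend_def)
    qed
  next
    assume late: "\<forall>N. \<exists>t\<ge>N. \<tau> t = p"
    show "\<forall>N. \<exists>t\<ge>N. prepend xs \<tau> t = p"
    proof
      fix N
      obtain t where "t \<ge> N" "\<tau> t = p"
        using late by blast
      then show "\<exists>t\<ge>N. prepend xs \<tau> t = p"
        by (intro exI[of _ "t + length xs"]) (auto simp: prepend_def)
    qed
  qed
  then show ?thesis
    by (simp add: in_correct_iff set_eq_iff)
qed

lemma participating_prepend: "participating (prepend xs \<tau>) = set xs \<union> participating \<tau>"
proof -
  have "xs ! i \<in> range (prepend xs \<tau>)" if "i < length xs" for i
    using that by (metis prepend_def rangeI)
  moreover have "\<tau> t \<in> range (prepend xs \<tau>)" for t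
    by (metis add_diff_cancel_right' not_add_less2 prepend_def rangeI)
  ultimately show ?thesis
    by (auto simp: participating_def prepend_def in_set_conv_nth)
qed

definition round_robin :: schedule where
  "round_robin t = [P1, P2, P3] ! (t mod 3)"

lemma correct_round_robin: "correct round_robin = UNIV"
proof -
  have "\<exists>t\<ge>N. round_robin t = p" for N p
  proof -
    have "p \<in> set [P1, P2, P3]"
      by (cases p) simp_all
    then obtain k where "k < 3" "[P1, P2, P3] ! k = p"
      unfolding in_set_conv_nth by (auto simp: numeral_3_eq_3)
    then have "round_robin (3 * N + k) = p"
      by (simp add: round_robin_def)
    then show ?thesis
      by (intro exI[of _ "3 * N + k"]) simp
  qed
  then show ?thesis
    by (auto simp: in_correct_iff)
qed

definition alternate :: "proc \<Rightarrow> proc \<Rightarrow> schedule" where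
  "alternate p q t = (if even t then p else q)"

lemma correct_alternate: "correct (alternate p q) = {p, q}"
proof -
  have "alternate p q (2 * N) = p" "alternate p q (2 * N + 1) = q" for N
    by (simp_all add: alternate_def)
  then have "\<exists>t\<ge>N. alternate p q t = p" "\<exists>t\<ge>N. alternate p q t = q" for N
    by (intro exI[of _ "2 * N"], simp, intro exI[of _ "2 * N + 1"], simp)
  moreover have "alternate p q t \<in> {p, q}" for t
    by (simp add: alternate_def)
  ultimately show ?thesis
    unfolding in_correct_iff set_eq_iff by (metis empty_iff insert_iff le_refl)
qed

lemma participating_alternate: "participating (alternate p q) = {p, q}"
  using correct_subset_participating[of "alternate p q"]
  by (auto simp: correct_alternate participating_def alternate_def)

lemma correct_const: "correct (\<lambda>_. p) = {p}"
  by (auto simp: correct_def)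

lemma participating_const: "participating (\<lambda>_. p) = {p}"
  by (simp add: participating_def)

definition decided_on :: "alg \<Rightarrow> (proc \<Rightarrow> nat option) \<Rightarrow> proc set \<Rightarrow> proc list \<Rightarrow> nat \<Rightarrow> bool" where
  "decided_on A I D xs v \<longleftrightarrow> (\<exists>t<length xs. xs ! t \<in> D \<and>
     a_dec A (xs ! t) (fst (run A (init_config A I) (take (Suc t) xs)) (xs ! t)) = Some v)"

lemma decides_iff_run:
  "decides A I \<sigma> p v \<longleftrightarrow>
     (\<exists>t. \<sigma> t = p \<and> a_dec A p (fst (run A (init_config A I) (map \<sigma> [0..<Suc t])) p) = Some v)"
  by (simp only: decides_def exec_eq_run)

lemma decided_on_append: "decided_on A I D xs v \<Longrightarrow> decided_on A I D (xs @ ys) v"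
  unfolding decided_on_def by (auto simp: nth_append)

lemma decided_on_mono:
  assumes "decided_on A I D (map \<sigma> [0..<n]) v" and "n \<le> m"
  shows "decided_on A I D (map \<sigma> [0..<m]) v"
proof -
  have "map \<sigma> [0..<m] = map \<sigma> [0..<n] @ map \<sigma> [n..<m]"
    using \<open>n \<le> m\<close> by (metis le_add_diff_inverse map_append upt_add_eq_append zero_le)
  then show ?thesis
    using decided_on_append[OF assms(1)] by simp
qed

lemma decides_imp_decided_on:
  assumes "decides A I \<sigma> p v" and "p \<in> D"
  shows "\<exists>n. decided_on A I D (map \<sigma> [0..<n]) v"
proof -
  obtain t where "\<sigma> t = p" "a_dec A p (fst (run A (init_config A I) (map \<sigma> [0..<Suc t])) p) = Some v"
    using assms(1) by (auto simp: decides_iff_run)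
  then have "decided_on A I D (map \<sigma> [0..<Suc t]) v"
    using assms(2) unfolding decided_on_def
    by (intro exI[of _ t]) (simp add: take_map del: upt_Suc)
  then show ?thesis ..
qed

lemma decided_on_imp_decides:
  assumes "decided_on A I D xs v" and xs: "map \<sigma> [0..<length xs] = xs"
  shows "\<exists>p\<in>D. decides A I \<sigma> p v"
proof -
  obtain t where t: "t < length xs" "xs ! t \<in> D"
    "a_dec A (xs ! t) (fst (run A (init_config A I) (take (Suc t) xs)) (xs ! t)) = Some v"
    using assms(1) by (auto simp: decided_on_def)
  have "\<sigma> t = xs ! t"
    using t(1) by (subst xs[symmetric]) simp
  moreover have "take (Suc t) xs = map \<sigma> [0..<Suc t]"
    using t(1) by (subst xs[symmetric]) (simp add: take_map del: upt_Suc)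
  ultimately show ?thesis
    using t(2,3) unfolding decides_iff_run
    by (intro bexI[of _ "xs ! t"] exI[of _ t]) (simp_all del: upt_Suc)
qed

lemma exec_prepend_prefix:
  "k \<le> length xs \<Longrightarrow> exec A I (prepend xs \<tau>) k = run A (init_config A I) (take k xs)"
  by (simp add: exec_eq_run map_prepend_prefix)

lemma exec_prepend_suffix:
  "exec A I (prepend xs \<tau>) (length xs + k) = run A (run A (init_config A I) xs) (map \<tau> [0..<k])"
  by (simp add: exec_eq_run map_prepend_suffix del: upt_Suc)

text \<open>After the swapped steps the two executions are indistinguishable to every process but r,
  and r never runs again.\<close>
lemma decides_swap:
  assumes "p \<noteq> q" and "d \<noteq> r" and "r \<notin> range \<tau>"
    and agree: "agree_on (- {r}) (run A (init_config A I) (c @ [p, q]))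
                                 (run A (init_config A I) (c @ [q, p]))"
    and "decides A I (prepend (c @ [p, q]) \<tau>) d v"
  shows "decides A I (prepend (c @ [q, p]) \<tau>) d v"
proof -
  let ?c0 = "init_config A I" and ?L = "length c"
  let ?\<sigma>1 = "prepend (c @ [p, q]) \<tau>" and ?\<sigma>2 = "prepend (c @ [q, p]) \<tau>"
  obtain t where t: "?\<sigma>1 t = d" and dec: "a_dec A d (fst (exec A I ?\<sigma>1 (Suc t)) d) = Some v"
    using assms(5) by (auto simp: decides_def)
  have after_pq: "fst (run A ?c0 (c @ [p, q])) d = fst (run A ?c0 (c @ [q, p])) d"
    using agree \<open>d \<noteq> r\<close> by (simp add: agree_on_def)
  consider "t < ?L" | "t = ?L" | "t = Suc ?L" | k where "t = ?L + 2 + k"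
    by (metis add_2_eq_Suc' less_Suc_eq less_imp_Suc_add not_less_eq)
  then show ?thesis
  proof cases
    case 1
    then have "?\<sigma>2 t = d" "exec A I ?\<sigma>2 (Suc t) = exec A I ?\<sigma>1 (Suc t)"
      using t by (simp_all add: prepend_def nth_append exec_prepend_prefix del: exec.simps)
    then show ?thesis
      using dec by (auto simp: decides_def)
  next
    case 2
    then have "d = p" "?\<sigma>2 (Suc ?L) = p"
      using t by (simp_all add: prepend_def nth_append)
    have "fst (exec A I ?\<sigma>1 (Suc t)) p = fst (run A ?c0 (c @ [p, q])) p"
      using 2 \<open>p \<noteq> q\<close> by (simp add: exec_prepend_prefix step_state_other del: exec.simps)
    also have "\<dots> = fst (exec A I ?\<sigma>2 (Suc (Suc ?L))) p"
      using after_pq \<open>d = p\<close> by (simp add: exec_prepend_prefix del: exec.simps)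
    finally show ?thesis
      using dec \<open>d = p\<close> \<open>?\<sigma>2 (Suc ?L) = p\<close> unfolding decides_def by metis
  next
    case 3
    then have "d = q" "?\<sigma>2 ?L = q"
      using t by (simp_all add: prepend_def nth_append)
    have "fst (exec A I ?\<sigma>1 (Suc t)) q = fst (run A ?c0 (c @ [q, p])) q"
      using 3 after_pq \<open>d = q\<close> by (simp add: exec_prepend_prefix del: exec.simps)
    also have "\<dots> = fst (exec A I ?\<sigma>2 (Suc ?L)) q"
      using \<open>p \<noteq> q\<close> by (simp add: exec_prepend_prefix step_state_other del: exec.simps)
    finally show ?thesis
      using dec \<open>d = q\<close> \<open>?\<sigma>2 ?L = q\<close> unfolding decides_def by metis
  next
    case 4
    have "set (map \<tau> [0..<Suc k]) \<subseteq> - {r}"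
      using \<open>r \<notin> range \<tau>\<close> by auto
    then have "agree_on (- {r}) (exec A I ?\<sigma>1 (length (c @ [p, q]) + Suc k))
                               (exec A I ?\<sigma>2 (length (c @ [q, p]) + Suc k))"
      unfolding exec_prepend_suffix by (rule agree_on_run[OF agree])
    moreover have "?\<sigma>2 t = d"
      using t 4 by (simp add: prepend_def)
    ultimately show ?thesis
      using dec 4 \<open>d \<noteq> r\<close> by (auto simp: decides_def agree_on_def)
  qed
qed

lemma chain_prefix:
  assumes "\<And>n. \<exists>u. W (Suc n) = W n @ u" and "m \<le> n"
  shows "\<exists>u. W n = W m @ u"
  using \<open>m \<le> n\<close>
proof (induction n rule: dec_induct)
  case (step n)
  then show ?case
    using assms(1)[of n] by (metis append.assoc)
qed simp

lemma chain_nth_stable: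
  assumes chain: "\<And>n. \<exists>u. W (Suc n) = W n @ u" and long: "\<And>n. n \<le> length (W n)"
    and "t < length (W n)"
  shows "W (Suc t) ! t = W n ! t"
proof (cases "n \<le> Suc t")
  case True
  then obtain u where "W (Suc t) = W n @ u"
    using chain_prefix[of W, OF chain] by blast
  then show ?thesis
    using \<open>t < length (W n)\<close> by (simp add: nth_append)
next
  case False
  then obtain u where "W n = W (Suc t) @ u"
    using chain_prefix[of W, OF chain, of "Suc t" n] by auto
  moreover have "t < length (W (Suc t))"
    using long[of "Suc t"] by simp
  ultimately show ?thesis
    by (simp add: nth_append)
qed

lemma fair_chain_limit:
  assumes chain: "\<And>n. \<exists>u. W (Suc n) = W n @ u @ [\<rho> n]"
  obtains \<sigma> where "correct \<rho> \<subseteq> correct \<sigma>" and "\<And>n. map \<sigma> [0..<length (W n)] = W n"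
proof
  let ?\<sigma> = "\<lambda>t. W (Suc t) ! t"
  have chain': "\<exists>u. W (Suc n) = W n @ u" for n
    using chain[of n] by (metis append.assoc)
  have long: "n \<le> length (W n)" for n
  proof (induction n)
    case (Suc n)
    then show ?case
      using chain[of n] by auto
  qed simp
  have stable: "?\<sigma> t = W n ! t" if "t < length (W n)" for t n
    by (rule chain_nth_stable[OF chain' long that])
  show "map ?\<sigma> [0..<length (W n)] = W n" for n
    by (rule nth_equalityI) (simp_all add: stable)
  show "correct \<rho> \<subseteq> correct ?\<sigma>"
  proof
    fix p
    assume "p \<in> correct \<rho>"
    have "\<exists>t\<ge>N. ?\<sigma> t = p" for N
    proof -
      obtain n where "n \<ge> N" "\<rho> n = p"
        using \<open>p \<in> correct \<rho>\<close> by (auto simp: in_correct_iff)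
      moreover obtain u where u: "W (Suc n) = W n @ u @ [\<rho> n]"
        using chain by blast
      moreover have "?\<sigma> (length (W (Suc n)) - 1) = W (Suc n) ! (length (W (Suc n)) - 1)"
        using stable[of _ "Suc n"] u by simp
      ultimately show ?thesis
        using long[of n] by (intro exI[of _ "length (W (Suc n)) - 1"]) (simp add: u nth_append)
    qed
    then show "p \<in> correct ?\<sigma>"
      by (simp add: in_correct_iff)
  qed
qed

section \<open>Impossibility of consensus tolerating one crash\<close>

locale one_crash_consensus =
  fixes A :: alg and I :: "proc \<Rightarrow> nat option" and D :: "proc set" and M :: "schedule set"
  assumes agreement: "\<And>\<sigma> p q v w. p \<in> D \<Longrightarrow> q \<in> D \<Longrightarrow>
      decides A I \<sigma> p v \<Longrightarrow> decides A I \<sigma> q w \<Longrightarrow> v = w"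
    and liveness: "\<And>\<sigma> p. \<sigma> \<in> M \<Longrightarrow> p \<in> D \<Longrightarrow> p \<in> correct \<sigma> \<Longrightarrow> \<exists>v. decides A I \<sigma> p v"
    and fair_runs: "\<And>\<sigma>. correct \<sigma> = UNIV \<Longrightarrow> \<sigma> \<in> M"
    and one_crash: "\<And>r. \<exists>\<tau> d. d \<in> D - {r} \<and> d \<in> correct \<tau> \<and> r \<notin> range \<tau> \<and>
      (\<forall>xs. prepend xs \<tau> \<in> M)"
    and two_decisions: "\<exists>\<sigma>1 \<sigma>2 p1 p2 v1 v2. p1 \<in> D \<and> p2 \<in> D \<and>
      decides A I \<sigma>1 p1 v1 \<and> decides A I \<sigma>2 p2 v2 \<and> v1 \<noteq> v2"
begin

definition valence :: "proc list \<Rightarrow> nat set" where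
  "valence xs = {v. \<exists>ys. decided_on A I D (xs @ ys) v}"

definition bivalent :: "proc list \<Rightarrow> bool" where
  "bivalent xs \<longleftrightarrow> (\<exists>v\<in>valence xs. \<exists>w\<in>valence xs. v \<noteq> w)"

lemma decided_on_unique:
  assumes "decided_on A I D xs v" and "decided_on A I D xs w"
  shows "v = w"
proof -
  obtain p q where "p \<in> D" "decides A I (prepend xs round_robin) p v"
    "q \<in> D" "decides A I (prepend xs round_robin) q w"
    using decided_on_imp_decides[OF assms(1) map_prepend] decided_on_imp_decides[OF assms(2) map_prepend]
    by blast
  then show ?thesis
    using agreement by blast
qed

lemma valence_append: "valence (xs @ ys) \<subseteq> valence xs"
proof
  fix v
  assume "v \<in> valence (xs @ ys)"
  then obtain zs where "decided_on A I D (xs @ ys @ zs) v"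
    by (auto simp: valence_def)
  then show "v \<in> valence xs"
    unfolding valence_def by (intro CollectI exI[of _ "ys @ zs"])
qed

lemma decides_in_valence:
  assumes "decides A I \<sigma> p v" and "p \<in> D" and xs: "map \<sigma> [0..<length xs] = xs"
  shows "v \<in> valence xs"
proof -
  obtain n where "decided_on A I D (map \<sigma> [0..<n]) v"
    using decides_imp_decided_on[OF assms(1,2)] by blast
  then have "decided_on A I D (map \<sigma> [0..<length xs + n]) v"
    by (rule decided_on_mono) simp
  moreover have "[0..<length xs + n] = [0..<length xs] @ [length xs..<length xs + n]"
    by (rule upt_add_eq_append) simp
  then have "map \<sigma> [0..<length xs + n] = xs @ map \<sigma> [length xs..<length xs + n]"
    using xs by simp
  ultimately show ?thesis
    unfolding valence_def by auto
qed

lemma decides_prepend_in_valence: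
  "decides A I (prepend xs \<tau>) p v \<Longrightarrow> p \<in> D \<Longrightarrow> v \<in> valence xs"
  using decides_in_valence map_prepend by blast

lemma valence_nonempty: "valence xs \<noteq> {}"
proof -
  obtain d where "d \<in> D"
    using one_crash by blast
  moreover have "prepend xs round_robin \<in> M" "d \<in> correct (prepend xs round_robin)"
    by (simp_all add: fair_runs correct_prepend correct_round_robin)
  ultimately obtain v where "decides A I (prepend xs round_robin) d v"
    using liveness by blast
  then show ?thesis
    using decides_prepend_in_valence \<open>d \<in> D\<close> by blast
qed

lemma univalent_valence:
  assumes "\<not> bivalent xs" and "v \<in> valence xs"
  shows "valence xs = {v}"
  using assms unfolding bivalent_def by blast

lemma decided_on_not_bivalent:
  assumes "decided_on A I D xs v"
  shows "\<not> bivalent xs"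
proof -
  have "w = v" if "w \<in> valence xs" for w
    using that decided_on_append[OF assms] decided_on_unique by (auto simp: valence_def)
  then show ?thesis
    unfolding bivalent_def by blast
qed

text \<open>The common value is decided by a run that continues c p q without the process r that can
  tell the two orders apart, but keeps another process of D correct.\<close>
lemma valence_commute: "\<exists>v. v \<in> valence (c @ [p]) \<and> v \<in> valence (c @ [q, p])"
proof (cases "q = p")
  case True
  obtain v where "v \<in> valence ((c @ [p]) @ [p])"
    using valence_nonempty by blast
  then have "v \<in> valence (c @ [p])"
    using valence_append by blast
  with \<open>v \<in> valence ((c @ [p]) @ [p])\<close> True show ?thesis
    by auto
next
  case False
  obtain r where "r \<in> {p, q}" and "agree_on (- {r})
      (step A q (step A p (run A (init_config A I) c))) (step A p (step A q (run A (init_config A I) c)))"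
    using steps_commute[OF \<open>q \<noteq> p\<close>[symmetric]] by blast
  then have agree: "agree_on (- {r})
      (run A (init_config A I) (c @ [p, q])) (run A (init_config A I) (c @ [q, p]))"
    by simp
  obtain \<tau> d where d: "d \<in> D" "d \<noteq> r" "d \<in> correct \<tau>" "r \<notin> range \<tau>"
    and in_M: "\<And>xs. prepend xs \<tau> \<in> M"
    using one_crash[of r] by blast
  have "d \<in> correct (prepend (c @ [p, q]) \<tau>)"
    by (simp add: correct_prepend d)
  then obtain v where v: "decides A I (prepend (c @ [p, q]) \<tau>) d v"
    using liveness[OF in_M d(1)] by blast
  then have "v \<in> valence ((c @ [p]) @ [q])"
    using decides_prepend_in_valence d(1) by simp
  then have "v \<in> valence (c @ [p])"
    using valence_append by blast
  moreover have "decides A I (prepend (c @ [q, p]) \<tau>) d v"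
    using decides_swap[OF \<open>q \<noteq> p\<close>[symmetric] d(2,4) agree v] .
  then have "v \<in> valence (c @ [q, p])"
    using decides_prepend_in_valence d(1) by blast
  ultimately show ?thesis
    by blast
qed

lemma bivalent_extend:
  assumes "bivalent w"
  shows "\<exists>u. bivalent (w @ u @ [p])"
proof (rule ccontr)
  assume "\<nexists>u. bivalent (w @ u @ [p])"
  then have univalent: "\<not> bivalent (w @ u @ [p])" for u
    by blast
  have same: "valence (w @ u @ [p]) = valence (w @ [p])" for u
  proof (induction u rule: rev_induct)
    case (snoc q u)
    obtain v where v: "v \<in> valence ((w @ u) @ [p])" "v \<in> valence ((w @ u) @ [q, p])"
      using valence_commute[of "w @ u" p q] by blast
    have "valence (w @ (u @ [q]) @ [p]) = {v}"
      using univalent_valence[OF univalent[of "u @ [q]"]] v(2) by simp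
    moreover have "valence (w @ u @ [p]) = {v}"
      using univalent_valence[OF univalent[of u]] v(1) by simp
    ultimately show ?case
      using snoc.IH by simp
  qed simp
  have "v \<in> valence (w @ [p])" if v: "v \<in> valence w" for v
  proof -
    obtain ys where "decided_on A I D (w @ ys) v"
      using v by (auto simp: valence_def)
    then have "v \<in> valence (w @ ys @ [p])"
      using decided_on_append[of A I D "w @ ys" v "[p]"] by (auto simp: valence_def)
    then show ?thesis
      using same by blast
  qed
  then show False
    using assms univalent[of "[]"] unfolding bivalent_def by auto
qed

lemma bivalent_Nil: "bivalent []"
proof -
  obtain \<sigma>1 \<sigma>2 p1 p2 v1 v2 where "p1 \<in> D" "p2 \<in> D"
    "decides A I \<sigma>1 p1 v1" "decides A I \<sigma>2 p2 v2" "v1 \<noteq> v2"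
    using two_decisions by blast
  then have "v1 \<in> valence []" "v2 \<in> valence []"
    using decides_in_valence[of _ _ _ "[]"] by simp_all
  with \<open>v1 \<noteq> v2\<close> show ?thesis
    unfolding bivalent_def by blast
qed

lemma impossible: False
proof -
  txt \<open>Extend bivalent prefixes forever; stage n ends with the round-robin step n, so that the
    limit run is fair and hence decides.\<close>
  define W where "W = rec_nat [] (\<lambda>n w. w @ (SOME u. bivalent (w @ u @ [round_robin n])) @ [round_robin n])"
  have W_Suc: "W (Suc n) = W n @ (SOME u. bivalent (W n @ u @ [round_robin n])) @ [round_robin n]" for n
    by (simp add: W_def)
  have bivalent_W: "bivalent (W n)" for n
  proof (induction n)
    case 0
    show ?case
      using bivalent_Nil by (simp add: W_def)
  next
    case (Suc n)
    then show ?case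
      unfolding W_Suc by (rule someI_ex[OF bivalent_extend])
  qed
  have long: "n \<le> length (W n)" for n
    by (induction n) (simp_all add: W_Suc)
  have "\<exists>u. W (Suc n) = W n @ u @ [round_robin n]" for n
    using W_Suc by blast
  then obtain \<sigma> where "correct round_robin \<subseteq> correct \<sigma>"
    and prefixes: "\<And>n. map \<sigma> [0..<length (W n)] = W n"
    by (rule fair_chain_limit) blast
  then have "correct \<sigma> = UNIV"
    by (simp add: correct_round_robin top.extremum_unique)
  then have "\<sigma> \<in> M"
    by (rule fair_runs)
  obtain d where "d \<in> D"
    using one_crash by blast
  then obtain v where "decides A I \<sigma> d v"
    using liveness[OF \<open>\<sigma> \<in> M\<close>] \<open>correct \<sigma> = UNIV\<close> by blast
  then obtain n where "decided_on A I D (map \<sigma> [0..<n]) v"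
    using decides_imp_decided_on \<open>d \<in> D\<close> by blast
  then have "decided_on A I D (map \<sigma> [0..<length (W n)]) v"
    using long by (rule decided_on_mono)
  then have "decided_on A I D (W n) v"
    by (simp only: prefixes)
  then show False
    using decided_on_not_bivalent bivalent_W by blast
qed

end

lemma not_one_crash_consensus: "\<not> one_crash_consensus A I D M"
  using one_crash_consensus.impossible by blast

section \<open>An algorithm that copies inputs\<close>

definition encode_input :: "nat option \<Rightarrow> nat" where
  "encode_input x = (case x of None \<Rightarrow> 0 | Some v \<Rightarrow> Suc v)"

definition decode_input :: "nat \<Rightarrow> nat option" where
  "decode_input s = (if s = 0 then None else Some (s - 1))"

lemma decode_encode_input [simp]: "decode_input (encode_input x) = x"
  by (cases x) (simp_all add: encode_input_def decode_input_def)

lemma decode_input_0 [simp]: "decode_input 0 = None"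
  by (simp add: decode_input_def)

definition source :: "proc \<Rightarrow> proc" where
  "source p = (if p = P1 then P1 else P2)"

text \<open>Local states are encoded inputs, 0 meaning that no input is known yet: p3 snapshots until
  the register of p2 holds its input. Only the processes in D decide.\<close>
definition copy_alg :: "proc set \<Rightarrow> alg" where
  "copy_alg D = \<lparr>a_init = (\<lambda>p x. if p = P3 then 0 else encode_input x),
     a_op = (\<lambda>p s. if p = P3 then Snapshot else Update s),
     a_next_upd = (\<lambda>p s. s),
     a_next_snap = (\<lambda>p s m. if s \<noteq> 0 then s else (case m P2 of None \<Rightarrow> 0 | Some c \<Rightarrow> c)),
     a_dec = (\<lambda>p s. if p \<in> D then decode_input s else None)\<rparr>"

lemma copy_alg_simps [simp]:
  "a_init (copy_alg D) p x = (if p = P3 then 0 else encode_input x)"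
  "a_op (copy_alg D) p s = (if p = P3 then Snapshot else Update s)"
  "a_next_upd (copy_alg D) p s = s"
  "a_next_snap (copy_alg D) p s m = (if s \<noteq> 0 then s else (case m P2 of None \<Rightarrow> 0 | Some c \<Rightarrow> c))"
  "a_dec (copy_alg D) p s = (if p \<in> D then decode_input s else None)"
  by (simp_all add: copy_alg_def)

lemma copy_alg_invariant:
  fixes D I \<sigma> n
  defines "c \<equiv> exec (copy_alg D) I \<sigma> n"
  shows "fst c P1 = encode_input (I P1) \<and> fst c P2 = encode_input (I P2)
    \<and> (snd c P2 \<noteq> None \<longrightarrow> snd c P2 = Some (encode_input (I P2)) \<and> P2 \<in> participating \<sigma>)
    \<and> (fst c P3 \<noteq> 0 \<longrightarrow> fst c P3 = encode_input (I P2) \<and> P2 \<in> participating \<sigma>)"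
  unfolding c_def
proof (induction n)
  case (Suc n)
  obtain st m where "exec (copy_alg D) I \<sigma> n = (st, m)"
    by fastforce
  moreover have "\<sigma> n \<in> participating \<sigma>"
    by (simp add: participating_def)
  ultimately show ?case
    using Suc by (cases "\<sigma> n") (auto simp: step_def split: option.split)
qed simp

lemma copy_alg_register:
  assumes "\<sigma> t = P2" and "t < n"
  shows "snd (exec (copy_alg D) I \<sigma> n) P2 = Some (encode_input (I P2))"
  using \<open>t < n\<close>
proof (induction n)
  case (Suc n)
  show ?case
  proof (cases "\<sigma> n = P2")
    case True
    then show ?thesis
      using copy_alg_invariant[of D I \<sigma> n] by (simp add: step_def Let_def)
  next
    case False
    then have "t < n"
      using Suc.prems \<open>\<sigma> t = P2\<close> less_Suc_eq by auto
    with False show ?thesis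
      using Suc.IH by (simp add: step_mem_other)
  qed
qed simp

lemma copy_alg_decides:
  assumes "decides (copy_alg D) I \<sigma> p v"
  shows "p \<in> D \<and> I (source p) = Some v \<and> source p \<in> participating \<sigma>"
proof -
  obtain t where "\<sigma> t = p" and "p \<in> D"
    and dec: "decode_input (fst (exec (copy_alg D) I \<sigma> (Suc t)) p) = Some v"
    using assms by (auto simp: decides_def split: if_splits)
  let ?s = "fst (exec (copy_alg D) I \<sigma> (Suc t)) p"
  have "p \<in> participating \<sigma>"
    using \<open>\<sigma> t = p\<close> by (auto simp: participating_def)
  moreover have "?s = encode_input (I (source p)) \<and> (p = P3 \<longrightarrow> P2 \<in> participating \<sigma>)"
    using copy_alg_invariant[of D I \<sigma> "Suc t"] dec by (cases p) (auto simp: source_def)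
  ultimately show ?thesis
    using \<open>p \<in> D\<close> dec by (cases p) (auto simp: source_def)
qed

lemma copy_alg_decides_input:
  assumes "p \<in> D" and "p \<in> correct \<sigma>" and "source p \<in> correct \<sigma>" and "I (source p) = Some v"
  shows "decides (copy_alg D) I \<sigma> p v"
proof -
  obtain t0 where "\<sigma> t0 = source p"
    using \<open>source p \<in> correct \<sigma>\<close> by (auto simp: in_correct_iff)
  moreover obtain t where "t \<ge> Suc t0" and "\<sigma> t = p"
    using \<open>p \<in> correct \<sigma>\<close> by (auto simp: in_correct_iff)
  moreover have "fst (exec (copy_alg D) I \<sigma> (Suc t)) p = encode_input (I (source p))"
  proof (cases "p = P3")
    case True
    then have "snd (exec (copy_alg D) I \<sigma> t) P2 = Some (encode_input (I P2))"
      using copy_alg_register \<open>\<sigma> t0 = source p\<close> \<open>t \<ge> Suc t0\<close> by (simp add: source_def)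
    then show ?thesis
      using True \<open>\<sigma> t = p\<close> copy_alg_invariant[of D I \<sigma> t]
      by (auto simp: step_def Let_def source_def)
  next
    case False
    then show ?thesis
      using copy_alg_invariant[of D I \<sigma> "Suc t"] by (cases p) (simp_all add: source_def)
  qed
  ultimately show ?thesis
    using assms(1,4) unfolding decides_def by auto
qed

lemma copy_alg_kset_solves:
  assumes card: "card (source ` D) \<le> k"
    and live: "\<And>\<sigma> p. \<sigma> \<in> M \<Longrightarrow> p \<in> correct \<sigma> \<Longrightarrow> p \<in> D \<and> source p \<in> correct \<sigma>"
  shows "kset_solves k M (copy_alg D)"
  unfolding kset_solves_def
proof (intro conjI allI impI)
  fix I :: "proc \<Rightarrow> nat option" and \<sigma>
  let ?decided = "{v. \<exists>p. decides (copy_alg D) I \<sigma> p v}"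
  have decided: "?decided \<subseteq> (\<lambda>q. the (I q)) ` source ` D"
    using copy_alg_decides by force
  have "finite ?decided"
    using finite_subset[OF decided] by simp
  moreover have "card ?decided \<le> k"
    using card_mono[OF _ decided] card_image_le[of "source ` D" "\<lambda>q. the (I q)"] card by simp
  moreover have "\<forall>v\<in>?decided. \<exists>q\<in>participating \<sigma>. I q = Some v"
    using copy_alg_decides by blast
  ultimately show "let D = ?decided in finite D \<and> card D \<le> k \<and>
      (\<forall>v\<in>D. \<exists>q\<in>participating \<sigma>. I q = Some v)"
    by simp
next
  fix I :: "proc \<Rightarrow> nat option" and \<sigma>
  assume "\<forall>p. I p \<noteq> None" and "\<sigma> \<in> M"
  then show "\<forall>p\<in>correct \<sigma>. \<exists>v. decides (copy_alg D) I \<sigma> p v"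
    using live copy_alg_decides_input by blast
qed

lemma copy_alg_cons23_solves:
  assumes "\<And>\<sigma>. \<sigma> \<in> M \<Longrightarrow> P3 \<in> correct \<sigma> \<Longrightarrow> P2 \<in> correct \<sigma>"
  shows "cons23_solves M (copy_alg {P2, P3})"
  unfolding cons23_solves_def
proof (rule conjI; intro allI impI)
  fix I \<sigma>
  have from_P2: "p \<in> {P2, P3} \<Longrightarrow> decides (copy_alg {P2, P3}) I \<sigma> p v \<Longrightarrow>
      I P2 = Some v \<and> P2 \<in> participating \<sigma>" for p v
    using copy_alg_decides[of "{P2, P3}" I \<sigma> p v] by (auto simp: source_def)
  have "\<forall>p v. p \<in> {P2, P3} \<and> decides (copy_alg {P2, P3}) I \<sigma> p v \<longrightarrow>
      (\<exists>q\<in>{P2, P3} \<inter> participating \<sigma>. I q = Some v)"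
    using from_P2 by blast
  moreover have "\<forall>p q v w. p \<in> {P2, P3} \<and> q \<in> {P2, P3} \<and> decides (copy_alg {P2, P3}) I \<sigma> p v \<and>
      decides (copy_alg {P2, P3}) I \<sigma> q w \<longrightarrow> v = w"
    using from_P2 by (metis option.inject)
  ultimately show "(\<forall>p v. p \<in> {P2, P3} \<and> decides (copy_alg {P2, P3}) I \<sigma> p v \<longrightarrow>
        (\<exists>q\<in>{P2, P3} \<inter> participating \<sigma>. I q = Some v)) \<and>
      (\<forall>p q v w. p \<in> {P2, P3} \<and> q \<in> {P2, P3} \<and> decides (copy_alg {P2, P3}) I \<sigma> p v \<and>
        decides (copy_alg {P2, P3}) I \<sigma> q w \<longrightarrow> v = w)"
    by blast
next
  fix I \<sigma>
  assume "cons23_inputs I" and "\<sigma> \<in> M"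
  show "\<forall>p\<in>{P2, P3} \<inter> correct \<sigma>. \<exists>v. decides (copy_alg {P2, P3}) I \<sigma> p v"
  proof
    fix p
    assume p: "p \<in> {P2, P3} \<inter> correct \<sigma>"
    then have "source p = P2" and "P2 \<in> correct \<sigma>"
      using assms \<open>\<sigma> \<in> M\<close> by (auto simp: source_def)
    moreover obtain v where "I P2 = Some v"
      using \<open>cons23_inputs I\<close> by (auto simp: cons23_inputs_def)
    ultimately show "\<exists>v. decides (copy_alg {P2, P3}) I \<sigma> p v"
      using p copy_alg_decides_input[of p "{P2, P3}" \<sigma> I v] by auto
  qed
qed

lemma kset_solves_safety:
  assumes "kset_solves k M A" and "\<forall>p. I p \<noteq> None"
  shows "finite {v. \<exists>p. decides A I \<sigma> p v} \<and> card {v. \<exists>p. decides A I \<sigma> p v} \<le> k \<and>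
    (\<forall>v\<in>{v. \<exists>p. decides A I \<sigma> p v}. \<exists>q\<in>participating \<sigma>. I q = Some v)"
  using conjunct1[OF assms(1)[unfolded kset_solves_def], THEN spec[of _ I], THEN spec[of _ \<sigma>],
      THEN mp, OF assms(2)]
  by (simp add: Let_def)

lemma kset_solves_liveness:
  assumes "kset_solves k M A" and "\<forall>p. I p \<noteq> None" and "\<sigma> \<in> M" and "p \<in> correct \<sigma>"
  shows "\<exists>v. decides A I \<sigma> p v"
  using conjunct2[OF assms(1)[unfolded kset_solves_def], THEN spec[of _ I], THEN spec[of _ \<sigma>],
      THEN mp, OF assms(2), THEN mp, OF assms(3)] assms(4) by blast

lemma kset_solves_validity:
  assumes "kset_solves k M A" and "\<forall>p. I p \<noteq> None" and "decides A I \<sigma> p v"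
  shows "\<exists>q\<in>participating \<sigma>. I q = Some v"
  using kset_solves_safety[OF assms(1,2), of \<sigma>] assms(3) by blast

lemma kset_solves_1_agreement:
  assumes "kset_solves 1 M A" and "\<forall>p. I p \<noteq> None"
    and "decides A I \<sigma> p v" and "decides A I \<sigma> q w"
  shows "v = w"
proof -
  have "finite {v. \<exists>p. decides A I \<sigma> p v}" and "card {v. \<exists>p. decides A I \<sigma> p v} \<le> Suc 0"
    using kset_solves_safety[OF assms(1,2), of \<sigma>] by simp_all
  moreover have "v \<in> {v. \<exists>p. decides A I \<sigma> p v}" "w \<in> {v. \<exists>p. decides A I \<sigma> p v}"
    using assms(3,4) by blast+
  ultimately show ?thesis
    using card_le_Suc0_iff_eq by blast
qed

lemma kset_0_unsolvable:
  assumes "\<sigma> \<in> M"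
  shows "\<not> kset_solvable 0 M"
proof
  assume "kset_solvable 0 M"
  then obtain A where A: "kset_solves 0 M A"
    by (auto simp: kset_solvable_def)
  have inputs: "\<forall>p. (\<lambda>_. Some 0) p \<noteq> None"
    by simp
  obtain p where "p \<in> correct \<sigma>"
    using correct_nonempty by blast
  then obtain v where "decides A (\<lambda>_. Some 0) \<sigma> p v"
    using kset_solves_liveness[OF A inputs \<open>\<sigma> \<in> M\<close>] by blast
  moreover have "finite {v. \<exists>p. decides A (\<lambda>_. Some 0) \<sigma> p v}"
    and "card {v. \<exists>p. decides A (\<lambda>_. Some 0) \<sigma> p v} = 0"
    using kset_solves_safety[OF A inputs, of \<sigma>] by simp_all
  then have "{v. \<exists>p. decides A (\<lambda>_. Some 0) \<sigma> p v} = {}"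
    by simp
  ultimately show False
    by blast
qed

lemma agreement_fun_eqI:
  assumes "\<sigma> \<in> M" and "participating \<sigma> \<subseteq> P"
    and "kset_solvable k {\<sigma> \<in> M. participating \<sigma> \<subseteq> P}"
    and "\<And>j. j < k \<Longrightarrow> \<not> kset_solvable j {\<sigma> \<in> M. participating \<sigma> \<subseteq> P}"
  shows "agreement_fun M P = k"
proof -
  have "(LEAST k. kset_solvable k {\<sigma> \<in> M. participating \<sigma> \<subseteq> P}) = k"
  proof (rule Least_equality)
    show "kset_solvable k {\<sigma> \<in> M. participating \<sigma> \<subseteq> P}"
      by (fact assms(3))
    show "k \<le> j" if "kset_solvable j {\<sigma> \<in> M. participating \<sigma> \<subseteq> P}" for j
      using assms(4) that not_less by blast
  qed
  then show ?thesis
    using assms(1,2) by (auto simp: agreement_fun_def)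
qed

lemma agreement_fun_eq_1:
  assumes "\<sigma> \<in> M" and "participating \<sigma> \<subseteq> P"
    and "kset_solvable 1 {\<sigma> \<in> M. participating \<sigma> \<subseteq> P}"
  shows "agreement_fun M P = 1"
  using assms kset_0_unsolvable[of \<sigma>] by (intro agreement_fun_eqI) auto

section \<open>The agreement function of the adversary\<close>

lemma prepend_in_adv_model_iff: "prepend xs \<tau> \<in> adv_model \<A> \<longleftrightarrow> \<tau> \<in> adv_model \<A>"
  by (simp add: adv_model_def correct_prepend)

lemma in_adv_model_Aadv_iff:
  "\<sigma> \<in> adv_model Aadv \<longleftrightarrow> correct \<sigma> = {P1} \<or> correct \<sigma> = {P2, P3} \<or> correct \<sigma> = UNIV"
  by (auto simp: adv_model_def Aadv_def UNIV_proc)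

lemma const_P1_in_adv_model_Aadv: "(\<lambda>_. P1) \<in> adv_model Aadv"
  by (simp add: in_adv_model_Aadv_iff correct_const)

lemma alternate_P2_P3_in_adv_model_Aadv: "alternate P2 P3 \<in> adv_model Aadv"
  by (simp add: in_adv_model_Aadv_iff correct_alternate)

lemma source_correct_adv_model_Aadv:
  assumes "\<sigma> \<in> adv_model Aadv" and "p \<in> correct \<sigma>"
  shows "source p \<in> correct \<sigma>"
  using assms by (auto simp: in_adv_model_Aadv_iff source_def)

lemma adv_model_Aadv_one_crash:
  "\<exists>\<tau> d. d \<noteq> r \<and> d \<in> correct \<tau> \<and> r \<notin> range \<tau> \<and> (\<forall>xs. prepend xs \<tau> \<in> adv_model Aadv)"
proof (cases "r = P1")
  case True
  then show ?thesis
    using alternate_P2_P3_in_adv_model_Aadv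
    by (intro exI[of _ "alternate P2 P3"] exI[of _ P2])
      (auto simp: prepend_in_adv_model_iff correct_alternate alternate_def)
next
  case False
  then show ?thesis
    using const_P1_in_adv_model_Aadv
    by (intro exI[of _ "\<lambda>_. P1"] exI[of _ P1]) (auto simp: prepend_in_adv_model_iff correct_const)
qed

text \<open>With input 0 for p1 and 1 for p2 and p3, the solo run of p1 decides 0 and a run of p2 and p3
  decides 1.\<close>
lemma adv_model_Aadv_consensus_unsolvable: "\<not> kset_solvable 1 (adv_model Aadv)"
proof
  let ?M = "adv_model Aadv" and ?I = "\<lambda>p. if p = P1 then Some 0 else Some (1::nat)"
  assume "kset_solvable 1 ?M"
  then obtain A where A: "kset_solves 1 ?M A"
    by (auto simp: kset_solvable_def)
  have inputs: "\<forall>p. ?I p \<noteq> None"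
    by simp
  have "one_crash_consensus A ?I UNIV ?M"
  proof
    show "v = w" if "decides A ?I \<sigma> p v" "decides A ?I \<sigma> q w" for \<sigma> p q v w
      using kset_solves_1_agreement[OF A inputs that] .
    show "\<exists>v. decides A ?I \<sigma> p v" if "\<sigma> \<in> ?M" "p \<in> correct \<sigma>" for \<sigma> p
      using kset_solves_liveness[OF A inputs that] .
    show "\<sigma> \<in> ?M" if "correct \<sigma> = UNIV" for \<sigma>
      using that by (simp add: in_adv_model_Aadv_iff)
    show "\<exists>\<tau> d. d \<in> UNIV - {r} \<and> d \<in> correct \<tau> \<and> r \<notin> range \<tau> \<and> (\<forall>xs. prepend xs \<tau> \<in> ?M)" for r
      using adv_model_Aadv_one_crash[of r] by simp
    obtain v1 where v1: "decides A ?I (\<lambda>_. P1) P1 v1"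
      using kset_solves_liveness[OF A inputs const_P1_in_adv_model_Aadv, of P1]
      by (auto simp: correct_const)
    obtain v2 where v2: "decides A ?I (alternate P2 P3) P2 v2"
      using kset_solves_liveness[OF A inputs alternate_P2_P3_in_adv_model_Aadv, of P2]
      by (auto simp: correct_alternate)
    have "v1 = 0" "v2 = 1"
      using kset_solves_validity[OF A inputs v1] kset_solves_validity[OF A inputs v2]
      by (auto simp: participating_const participating_alternate)
    with v1 v2 show "\<exists>\<sigma>1 \<sigma>2 p1 p2 v1 v2. p1 \<in> UNIV \<and> p2 \<in> UNIV \<and>
        decides A ?I \<sigma>1 p1 v1 \<and> decides A ?I \<sigma>2 p2 v2 \<and> v1 \<noteq> v2"
      by blast
  qed
  then show False
    by (simp add: not_one_crash_consensus)
qed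

lemma agreement_fun_Aadv_UNIV: "agreement_fun (adv_model Aadv) UNIV = 2"
proof (rule agreement_fun_eqI)
  have "source ` UNIV = {P1, P2}"
    unfolding UNIV_proc by (auto simp: source_def)
  then show "kset_solvable 2 {\<sigma> \<in> adv_model Aadv. participating \<sigma> \<subseteq> UNIV}"
    unfolding kset_solvable_def using source_correct_adv_model_Aadv
    by (intro exI[of _ "copy_alg UNIV"] copy_alg_kset_solves) auto
  show "\<not> kset_solvable j {\<sigma> \<in> adv_model Aadv. participating \<sigma> \<subseteq> UNIV}" if "j < 2" for j
    using that kset_0_unsolvable[OF const_P1_in_adv_model_Aadv] adv_model_Aadv_consensus_unsolvable
    by (auto simp: less_2_cases_iff)
qed (use const_P1_in_adv_model_Aadv in auto)

lemma agreement_fun_Aadv_single: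
  assumes "p \<noteq> P1"
  shows "agreement_fun (adv_model Aadv) {p} = 0"
proof -
  have "\<not> participating \<sigma> \<subseteq> {p}" if "\<sigma> \<in> adv_model Aadv" for \<sigma>
    using that assms correct_nonempty[of \<sigma>] correct_subset_participating[of \<sigma>]
    by (auto simp: in_adv_model_Aadv_iff)
  then show ?thesis
    by (auto simp: agreement_fun_def)
qed

lemma agreement_fun_Aadv_with_P1:
  assumes "P1 \<in> P" and "\<not> {P2, P3} \<subseteq> P"
  shows "agreement_fun (adv_model Aadv) P = 1"
proof (rule agreement_fun_eq_1)
  let ?M = "{\<sigma> \<in> adv_model Aadv. participating \<sigma> \<subseteq> P}"
  have "correct \<sigma> = {P1}" if "\<sigma> \<in> ?M" for \<sigma>
    using that assms correct_subset_participating[of \<sigma>] by (auto simp: in_adv_model_Aadv_iff)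
  then show "kset_solvable 1 ?M"
    unfolding kset_solvable_def
    by (intro exI[of _ "copy_alg {P1}"] copy_alg_kset_solves) (auto simp: source_def)
qed (use assms const_P1_in_adv_model_Aadv in \<open>auto simp: participating_const\<close>)

lemma agreement_fun_Aadv_P2_P3: "agreement_fun (adv_model Aadv) {P2, P3} = 1"
proof (rule agreement_fun_eq_1)
  let ?M = "{\<sigma> \<in> adv_model Aadv. participating \<sigma> \<subseteq> {P2, P3}}"
  have "correct \<sigma> = {P2, P3}" if "\<sigma> \<in> ?M" for \<sigma>
    using that correct_subset_participating[of \<sigma>] by (auto simp: in_adv_model_Aadv_iff)
  then show "kset_solvable 1 ?M"
    unfolding kset_solvable_def
    by (intro exI[of _ "copy_alg {P2, P3}"] copy_alg_kset_solves) (auto simp: source_def)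
qed (use alternate_P2_P3_in_adv_model_Aadv in \<open>auto simp: participating_alternate\<close>)

lemma agreement_fun_Aadv_other:
  assumes "P \<noteq> {}" "P \<noteq> {P2}" "P \<noteq> {P3}" "P \<noteq> UNIV"
  shows "agreement_fun (adv_model Aadv) P = 1"
proof (cases "P1 \<in> P")
  case True
  have "\<not> {P2, P3} \<subseteq> P"
  proof
    assume "{P2, P3} \<subseteq> P"
    with True have "UNIV \<subseteq> P"
      by (simp add: UNIV_proc)
    with \<open>P \<noteq> UNIV\<close> show False
      by blast
  qed
  with True show ?thesis
    by (rule agreement_fun_Aadv_with_P1)
next
  case False
  have "P \<subseteq> {P2, P3}"
  proof
    fix x
    assume "x \<in> P"
    with False show "x \<in> {P2, P3}"
      by (cases x) auto
  qed
  moreover have "P2 \<in> P"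
  proof (rule ccontr)
    assume "P2 \<notin> P"
    with \<open>P \<subseteq> {P2, P3}\<close> have "P \<subseteq> {P3}"
      by blast
    with assms(1,3) show False
      by (simp add: subset_singleton_iff)
  qed
  moreover have "P3 \<in> P"
  proof (rule ccontr)
    assume "P3 \<notin> P"
    with \<open>P \<subseteq> {P2, P3}\<close> have "P \<subseteq> {P2}"
      by blast
    with assms(1,2) show False
      by (simp add: subset_singleton_iff)
  qed
  ultimately have "P = {P2, P3}"
    by blast
  then show ?thesis
    by (simp add: agreement_fun_Aadv_P2_P3)
qed

section \<open>Consensus among p2 and p3\<close>

lemma cons23_solves_validity:
  assumes "cons23_solves M A" and "cons23_inputs I" and "p \<in> {P2, P3}" and "decides A I \<sigma> p v"
  shows "\<exists>q\<in>{P2, P3} \<inter> participating \<sigma>. I q = Some v"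
  using conjunct1[OF assms(1)[unfolded cons23_solves_def], THEN spec[of _ I], THEN spec[of _ \<sigma>],
      THEN mp, OF assms(2), THEN conjunct1] assms(3,4) by blast

lemma cons23_solves_agreement:
  assumes "cons23_solves M A" and "cons23_inputs I" and "p \<in> {P2, P3}" and "q \<in> {P2, P3}"
    and "decides A I \<sigma> p v" and "decides A I \<sigma> q w"
  shows "v = w"
  using conjunct1[OF assms(1)[unfolded cons23_solves_def], THEN spec[of _ I], THEN spec[of _ \<sigma>],
      THEN mp, OF assms(2), THEN conjunct2] assms(3-6) by blast

lemma cons23_solves_liveness:
  assumes "cons23_solves M A" and "cons23_inputs I"
    and "\<sigma> \<in> M" and "p \<in> {P2, P3}" and "p \<in> correct \<sigma>"
  shows "\<exists>v. decides A I \<sigma> p v"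
  using conjunct2[OF assms(1)[unfolded cons23_solves_def], THEN spec[of _ I], THEN spec[of _ \<sigma>],
      THEN mp, OF assms(2), THEN mp, OF assms(3)] assms(4,5) by blast

lemma adv_model_Aadv_cons23_solvable: "cons23_solvable (adv_model Aadv)"
  unfolding cons23_solvable_def
  by (rule exI, rule copy_alg_cons23_solves) (auto simp: in_adv_model_Aadv_iff)

lemma Compl_singleton_proc: "- {P1} = {P2, P3}" "- {P2} = {P1, P3}" "- {P3} = {P1, P2}"
  by (auto simp: Compl_eq_Diff_UNIV UNIV_proc)

lemma agreement_fun_Aadv_Compl: "agreement_fun (adv_model Aadv) (- {r}) = 1"
  by (cases r) (simp_all add: Compl_singleton_proc agreement_fun_Aadv_P2_P3 agreement_fun_Aadv_with_P1)

text \<open>A run of the agreement-function model may crash one process after all three have taken a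
  step, and may run any two processes without crash.\<close>
lemma prepend_in_alpha_model:
  assumes "participating \<tau> = - {r}" and "correct \<tau> = - {r}"
  shows "prepend xs \<tau> \<in> alpha_model (agreement_fun (adv_model Aadv))"
proof (cases "r \<in> set xs")
  case True
  then have "participating (prepend xs \<tau>) = UNIV"
    and "participating (prepend xs \<tau>) - correct (prepend xs \<tau>) = {r}"
    using assms by (auto simp: participating_prepend correct_prepend)
  then show ?thesis
    by (simp add: alpha_model_def agreement_fun_Aadv_UNIV)
next
  case False
  then have "participating (prepend xs \<tau>) = - {r}"
    and "participating (prepend xs \<tau>) - correct (prepend xs \<tau>) = {}"
    using assms by (auto simp: participating_prepend correct_prepend)
  then show ?thesis
    by (simp add: alpha_model_def agreement_fun_Aadv_Compl)
qed

lemma prepend_alternate_in_alpha_model: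
  "{p, q} = - {r} \<Longrightarrow> prepend xs (alternate p q) \<in> alpha_model (agreement_fun (adv_model Aadv))"
  by (rule prepend_in_alpha_model) (simp_all add: participating_alternate correct_alternate)

lemma alpha_model_Aadv_one_crash:
  "\<exists>\<tau> d. d \<in> {P2, P3} - {r} \<and> d \<in> correct \<tau> \<and> r \<notin> range \<tau> \<and>
    (\<forall>xs. prepend xs \<tau> \<in> alpha_model (agreement_fun (adv_model Aadv)))"
proof -
  obtain p q where pq: "{p, q} = - {r}" and "p \<in> {P2, P3}"
  proof (cases r)
    case P1
    then show thesis
      using that[of P2 P3] by (simp add: Compl_singleton_proc)
  next
    case P2
    then show thesis
      using that[of P3 P1] by (simp add: Compl_singleton_proc insert_commute)
  next
    case P3
    then show thesis
      using that[of P2 P1] by (simp add: Compl_singleton_proc insert_commute)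
  qed
  moreover have "range (alternate p q) = - {r}"
    using pq participating_alternate by (simp add: participating_def)
  ultimately show ?thesis
    using prepend_alternate_in_alpha_model[OF pq]
    by (intro exI[of _ "alternate p q"] exI[of _ p]) (auto simp: correct_alternate)
qed

text \<open>With inputs 0 for p2 and 1 for p3, a run of p1 and p2 must decide 0 and a run of p1 and p3
  must decide 1.\<close>
lemma alpha_model_Aadv_cons23_unsolvable:
  "\<not> cons23_solvable (alpha_model (agreement_fun (adv_model Aadv)))"
proof
  let ?M = "alpha_model (agreement_fun (adv_model Aadv))"
  let ?I = "\<lambda>p. if p = P1 then None else if p = P2 then Some 0 else Some (1::nat)"
  assume "cons23_solvable ?M"
  then obtain A where A: "cons23_solves ?M A"
    by (auto simp: cons23_solvable_def)
  have inputs: "cons23_inputs ?I"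
    by (simp add: cons23_inputs_def)
  note valid = cons23_solves_validity[OF A inputs]
  note live = cons23_solves_liveness[OF A inputs]
  have "one_crash_consensus A ?I {P2, P3} ?M"
  proof
    show "v = w" if "p \<in> {P2, P3}" "q \<in> {P2, P3}" "decides A ?I \<sigma> p v" "decides A ?I \<sigma> q w"
      for \<sigma> p q v w
      using cons23_solves_agreement[OF A inputs that] .
    show "\<exists>v. decides A ?I \<sigma> p v" if "\<sigma> \<in> ?M" "p \<in> {P2, P3}" "p \<in> correct \<sigma>" for \<sigma> p
      using live[OF that] .
    show "\<sigma> \<in> ?M" if "correct \<sigma> = UNIV" for \<sigma>
      using that correct_subset_participating[of \<sigma>]
      by (simp add: alpha_model_def agreement_fun_Aadv_UNIV top.extremum_unique)
    show "\<exists>\<tau> d. d \<in> {P2, P3} - {r} \<and> d \<in> correct \<tau> \<and> r \<notin> range \<tau> \<and> (\<forall>xs. prepend xs \<tau> \<in> ?M)"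
      for r
      by (rule alpha_model_Aadv_one_crash)
    have "alternate P1 P2 \<in> ?M" "alternate P1 P3 \<in> ?M"
      using prepend_alternate_in_alpha_model[of P1 P2 P3 "[]"] prepend_alternate_in_alpha_model[of P1 P3 P2 "[]"]
      by (simp_all add: Compl_singleton_proc)
    then obtain v1 v2 where v1: "decides A ?I (alternate P1 P2) P2 v1"
      and v2: "decides A ?I (alternate P1 P3) P3 v2"
      using live[of "alternate P1 P2" P2] live[of "alternate P1 P3" P3] by (auto simp: correct_alternate)
    have "v1 = 0" "v2 = 1"
      using valid[OF _ v1] valid[OF _ v2] by (auto simp: participating_alternate)
    with v1 v2 show "\<exists>\<sigma>1 \<sigma>2 p1 p2 v1 v2. p1 \<in> {P2, P3} \<and> p2 \<in> {P2, P3} \<and>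
        decides A ?I \<sigma>1 p1 v1 \<and> decides A ?I \<sigma>2 p2 v2 \<and> v1 \<noteq> v2"
      by blast
  qed
  then show False
    by (simp add: not_one_crash_consensus)
qed

section \<open>Set consensus power of the adversary\<close>

lemma restr_empty [simp]: "restr {} P = {}"
  by (simp add: restr_def)

lemma restr_insert [simp]: "restr (insert S A) P = (if S \<subseteq> P then insert S (restr A P) else restr A P)"
  by (auto simp: restr_def)

lemma setcon_empty: "setcon {} = 0"
  by (subst setcon.simps) simp

lemma setcon_nonempty:
  "A \<noteq> {} \<Longrightarrow> setcon A = Max ((\<lambda>S. Min ((\<lambda>a. setcon (restr A (S - {a}))) ` S) + 1) ` A)"
  by (subst setcon.simps) simp

lemma setcon_singleton:
  assumes "S \<noteq> {}"
  shows "setcon {S} = 1"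
proof -
  have "restr {S} (S - {a}) = {}" if "a \<in> S" for a
    using that by (auto simp: restr_def)
  then have "(\<lambda>a. setcon (restr {S} (S - {a}))) ` S = {0}"
    using assms by (auto simp: setcon_empty)
  then show ?thesis
    by (simp add: setcon_nonempty)
qed

lemma setcon_Aadv: "setcon Aadv = 2"
  unfolding Aadv_def
  by (subst setcon_nonempty) (simp_all add: insert_Diff_if setcon_empty setcon_singleton)

lemma restr2_Aadv: "restr2 Aadv UNIV {P2, P3} = {{P2, P3}, {P1, P2, P3}}"
  by (auto simp: restr2_def restr_def Aadv_def)

lemma setcon_restr2_Aadv: "setcon (restr2 Aadv UNIV {P2, P3}) = 1"
  unfolding restr2_Aadv
  by (subst setcon_nonempty) (simp_all add: insert_Diff_if setcon_empty setcon_singleton)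

lemma Aadv_not_fair: "\<not> fair Aadv"
proof
  assume "fair Aadv"
  then have "setcon (restr2 Aadv UNIV {P2, P3}) = min (card {P2, P3}) (setcon (restr Aadv UNIV))"
    unfolding fair_def by blast
  moreover have "restr Aadv UNIV = Aadv"
    by (auto simp: restr_def)
  ultimately show False
    by (simp add: setcon_restr2_Aadv setcon_Aadv)
qed

theorem mainTheorem14:
  shows "setcon Aadv = 2 \<and> setcon (restr2 Aadv UNIV {P2, P3}) = 1 \<and> \<not> fair Aadv
    \<and> agreement_fun (adv_model Aadv) {P2} = 0
    \<and> agreement_fun (adv_model Aadv) {P3} = 0
    \<and> agreement_fun (adv_model Aadv) UNIV = 2
    \<and> (\<forall>P. P \<noteq> {} \<and> P \<noteq> {P2} \<and> P \<noteq> {P3} \<and> P \<noteq> UNIV \<longrightarrow>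
          agreement_fun (adv_model Aadv) P = 1)
    \<and> cons23_solvable (adv_model Aadv)
    \<and> \<not> cons23_solvable (alpha_model (agreement_fun (adv_model Aadv)))"
  using setcon_Aadv setcon_restr2_Aadv Aadv_not_fair
    agreement_fun_Aadv_single[of P2] agreement_fun_Aadv_single[of P3] agreement_fun_Aadv_UNIV
    agreement_fun_Aadv_other adv_model_Aadv_cons23_solvable alpha_model_Aadv_cons23_unsolvable
  by simp

end
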